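(* Consider $N$ material points $(P_i,m_i)$ with Cartesian coordinates $\mathbf X(\mathbf q,t)\in\mathbb R^{3N}$ (smooth, $\mathbf q\in\mathbb R^\ell$), momenta $\mathbf Q=(m_1\dot P_1,\dots,m_N\dot P_N)$, subject to a total force $\mathcal F=\mathcal F_0+\mathcal F_S+\mathcal F_A+\mathcal F_R+\mathcal G$, where: (i) $J_{\mathbf q}^T\mathbf X\,\mathcal F_0=\nabla_{\mathbf q}U_0$ for a smooth $U_0(\mathbf q,t)$; (ii) $J_{\mathbf q}^T\mathbf X\,\mathcal F_S=\mathcal O_s[\mathcal U_S]$ for some $s\ge0$ and smooth $\mathcal U_S(\mathbf q,\dots,\mathbf q^{(s+1)},t)$; (iii) $\mathcal F_A=\mathbb L\mathbf X^{(h+1)}$ for some integer $h\ge1$ and constant diagonal positive matrix $\mathbb L$, with $\mathcal U_A=\frac12\mathbb L\mathbf X^{(h)}\cdot\mathbf X^{(h)}$; (iv) $J_{\mathbf q}^T\mathbf X\,\mathcal F_R=-\nabla_{\mathbf q^{(\sigma)}}\mathcal R$ for some integer $\sigma\ge1$ and smooth $\mathcal R(\mathbf q,\dots,\mathbf q^{(\sigma)},t)$; (v) $\mathcal G=\mathcal G(\mathbf q,\dots,\mathbf q^{(\varrho-1)},t)$ for some integer $\varrho\ge1$, and $\gamma_\varrho=(J_{\mathbf q}^T\mathbf X\,\mathcal G)\cdot\mathbf q^{(\varrho)}$. Let $r=\max(s,h-1,\sigma,\varrho)$, $\mathcal L=\frac12\mathbf Q\cdot\dot{\mathbf X}+U_0$,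 and $$\mathcal Y_r=\frac{d^r\mathcal L}{dt^r}+\frac{d^{r-s}\mathcal U_S}{dt^{r-s}}-\frac1h\frac{d^{r-(h-1)}\mathcal U_A}{dt^{r-(h-1)}}-\frac{d^{r-\sigma}\mathcal R}{dt^{r-\sigma}}+\frac{d^{r-\varrho}\gamma_\varrho}{dt^{r-\varrho}}.$$ Then $\mathcal O_r[\mathcal Y_r]=J_{\mathbf q}^T\mathbf X(\mathcal F-\dot{\mathbf Q})$; in particular the Newton equations projected on the Lagrangian components, $J_{\mathbf q}^T\mathbf X\,\dot{\mathbf Q}=J_{\mathbf q}^T\mathbf X\,\mathcal F$, are equivalent to $$\nabla_{\mathbf q^{(r)}}\mathcal Y_r-(r+1)\frac{d}{dt}\nabla_{\mathbf q^{(r+1)}}\mathcal Y_r=0.$$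
   Context: $\mathbf q^{(h)}$ denotes the $h$-th time derivative (with $\mathbf q^{(0)}=\mathbf q$), treated as independent variables; $\mathbf X^{(h)}$ is the $h$-th total time derivative of $\mathbf X(\mathbf q(t),t)$ expressed as a function of $\mathbf q,\dots,\mathbf q^{(h)},t$. For $F(\mathbf q,\dots,\mathbf q^{(k)},t)$, $\frac{dF}{dt}=\partial_tF+\sum_{j=0}^k\nabla_{\mathbf q^{(j)}}F\cdot\mathbf q^{(j+1)}$ is the total time derivative. For $\mathbf w\in\mathbb R^{3N}$, $J_{\mathbf q}^T\mathbf X\,\mathbf w$ is the $\ell$-vector with components $\mathbf w\cdot\partial\mathbf X/\partial q_k$ (Lagrangian components). For $r\ge0$ and $\mathcal Y_r$ depending on $\mathbf q,\dots,\mathbf q^{(r+1)},t$, $\mathcal O_r[\mathcal Y_r]=\nabla_{\mathbf q^{(r)}}\mathcal Y_r-(r+1)\frac{d}{dt}\nabla_{\mathbf q^{(r+1)}}\mathcal Y_r$. *)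

theory Defs
  imports "HOL-Analysis.Analysis"
begin

text \<open>A point of the (infinite) jet space is a pair (z, t) where
  z j :: real^'l is the value of the independent variable q^(j) (z 0 = q) and t is time.
  A jet function is a function on this space that depends only on finitely many
  of the q^(j) (see depends_upto).\<close>

type_synonym 'l jet = "(nat \<Rightarrow> real^'l) \<times> real"

text \<open>Coordinates of the jet space: time, or the k-th component of q^(j).\<close>
datatype 'l jcoord = TC | QC nat 'l

definition depends_upto :: "nat \<Rightarrow> ('l jet \<Rightarrow> 'b) \<Rightarrow> bool" where
  "depends_upto k F \<longleftrightarrow> (\<forall>z z' t. (\<forall>j\<le>k. z j = z' j) \<longrightarrow> F (z, t) = F (z', t))"

definition jet_order :: "('l jet \<Rightarrow> 'b) \<Rightarrow> nat" where
  "jet_order F = (LEAST k. depends_upto k F)"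

definition jshift :: "('l::finite) jcoord \<Rightarrow> real \<Rightarrow> 'l jet \<Rightarrow> 'l jet" where
  "jshift c x p = (case c of
      TC \<Rightarrow> (fst p, snd p + x)
    | QC j k \<Rightarrow> ((fst p)(j := fst p j + x *\<^sub>R axis k 1), snd p))"

definition pdc :: "('l::finite) jcoord \<Rightarrow> ('l jet \<Rightarrow> real) \<Rightarrow> 'l jet \<Rightarrow> real" where
  "pdc c F p = deriv (\<lambda>x. F (jshift c x p)) 0"

definition pdcE :: "('l::finite) jcoord \<Rightarrow> ('l jet \<Rightarrow> 'b::euclidean_space) \<Rightarrow> 'l jet \<Rightarrow> 'b" where
  "pdcE c F p = (\<Sum>b\<in>Basis. pdc c (\<lambda>p'. F p' \<bullet> b) p *\<^sub>R b)"

definition gradq :: "nat \<Rightarrow> (('l::finite) jet \<Rightarrow> real) \<Rightarrow> 'l jet \<Rightarrow> real^'l" where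
  "gradq j F p = (\<chi> k. pdc (QC j k) F p)"

definition pd_list :: "('l::finite) jcoord list \<Rightarrow> ('l jet \<Rightarrow> real) \<Rightarrow> 'l jet \<Rightarrow> real" where
  "pd_list cs F = foldr pdc cs F"

definition smooth_jet :: "(('l::finite) jet \<Rightarrow> real) \<Rightarrow> bool" where
  "smooth_jet F \<longleftrightarrow> (\<forall>cs. continuous_on UNIV (pd_list cs F) \<and>
      (\<forall>c p. (\<lambda>x. pd_list cs F (jshift c x p)) differentiable (at 0)))"

definition tdiff :: "(('l::finite) jet \<Rightarrow> real) \<Rightarrow> 'l jet \<Rightarrow> real" where
  "tdiff F p = pdc TC F p + (\<Sum>j\<le>jet_order F. gradq j F p \<bullet> fst p (Suc j))"

definition tdiffE :: "(('l::finite) jet \<Rightarrow> 'b::euclidean_space) \<Rightarrow> 'l jet \<Rightarrow> 'b" where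
  "tdiffE F p = (\<Sum>b\<in>Basis. tdiff (\<lambda>p'. F p' \<bullet> b) p *\<^sub>R b)"

definition Oop :: "nat \<Rightarrow> (('l::finite) jet \<Rightarrow> real) \<Rightarrow> 'l jet \<Rightarrow> real^'l" where
  "Oop r Y p = gradq r Y p - real (r + 1) *\<^sub>R tdiffE (gradq (Suc r) Y) p"

definition JT :: "(('l::finite) jet \<Rightarrow> 'b::euclidean_space) \<Rightarrow> 'l jet \<Rightarrow> 'b \<Rightarrow> real^'l" where
  "JT X p w = (\<chi> k. w \<bullet> pdcE (QC 0 k) X p)"

end

theory Submission
  imports Defs
begin

text \<open>Write \<open>d/dt\<close> for the total time derivative on the jet space. Because mixed partial
  derivatives commute, \<open>\<partial>(dF/dt)/\<partial>q\<^sup>(\<^sup>j\<^sup>) = d/dt \<partial>F/\<partial>q\<^sup>(\<^sup>j\<^sup>) + \<partial>F/\<partial>q\<^sup>(\<^sup>j\<^sup>-\<^sup>1\<^sup>)\<close>, and hence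
  \<open>\<O>\<^sub>k\<^sub>+\<^sub>1[dF/dt] = \<O>\<^sub>k[F]\<close> whenever \<open>F\<close> depends on \<open>q, \<dots>, q\<^sup>(\<^sup>k\<^sup>+\<^sup>1\<^sup>)\<close> only. So \<open>\<O>\<^sub>r\<close> applied
  to each term of \<open>\<Y>\<^sub>r\<close> collapses to \<open>\<O>\<close> at the natural order of that term, and these are
  computed directly: for a weighted sum of squares of \<open>X\<^sup>(\<^sup>n\<^sup>+\<^sup>1\<^sup>)\<close> (kinetic energy for \<open>n = 0\<close>,
  \<open>\<U>\<^sub>A\<close> for \<open>n = h - 1\<close>) one gets \<open>-(n+1)\<close> times the Lagrangian components of the weighted
  \<open>X\<^sup>(\<^sup>n\<^sup>+\<^sup>2\<^sup>)\<close>; \<open>\<O>\<^sub>\<sigma>[\<R>] = \<nabla>\<^sub>q\<^sub>(\<^sub>\<sigma>\<^sub>)\<R>\<close>; and \<open>\<O>\<^sub>\<rho>[\<gamma>\<^sub>\<rho>] = J\<^sup>T\<G>\<close>, since \<open>\<gamma>\<^sub>\<rho>\<close> is linear in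
  \<open>q\<^sup>(\<^sup>\<rho>\<^sup>)\<close> with coefficients of lower order. Linearity of \<open>\<O>\<^sub>r\<close> assembles the pieces.\<close>

section \<open>Partial derivatives on the jet space\<close>

lemma jshift_zero [simp]: "jshift c 0 p = p"
  by (simp add: jshift_def split: jcoord.split)

lemma jshift_jshift: "jshift c x (jshift c y p) = jshift c (x + y) p"
  by (auto simp: jshift_def fun_eq_iff algebra_simps split: jcoord.split)

lemma jshift_commute: "jshift c x (jshift c' y p) = jshift c' y (jshift c x p)"
  by (auto simp: jshift_def fun_eq_iff algebra_simps split: jcoord.split)

lemma fst_jshift:
  "fst (jshift c x p) i = fst p i + (case c of TC \<Rightarrow> 0 | QC j k \<Rightarrow> if i = j then x *\<^sub>R axis k 1 else 0)"
  by (auto simp: jshift_def split: jcoord.split)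

lemma snd_jshift: "snd (jshift c x p) = snd p + (case c of TC \<Rightarrow> x | QC j k \<Rightarrow> 0)"
  by (auto simp: jshift_def split: jcoord.split)

lemma jet_coord_jshift:
  "fst (jshift c x p) j $ k = fst p j $ k + (case c of TC \<Rightarrow> 0 | QC j' k' \<Rightarrow> if j = j' \<and> k = k' then x else 0)"
  by (auto simp: fst_jshift axis_def split: jcoord.split)

lemma continuous_on_if_const [continuous_intros]:
  "continuous_on S f \<Longrightarrow> continuous_on S g \<Longrightarrow> continuous_on S (\<lambda>x. if P then f x else g x)"
  by (cases P) auto

lemma continuous_on_jshift_jshift:
  "continuous_on UNIV (\<lambda>u::real \<times> real. jshift c' (snd u) (jshift c (fst u) p))"
proof -
  have "continuous_on UNIV (\<lambda>u::real \<times> real. fst (jshift c' (snd u) (jshift c (fst u) p)))"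
    by (rule continuous_on_coordinatewise_then_product)
      (cases c; cases c'; auto simp: fst_jshift intro!: continuous_intros)
  moreover have "continuous_on UNIV (\<lambda>u::real \<times> real. snd (jshift c' (snd u) (jshift c (fst u) p)))"
    by (cases c; cases c'; auto simp: snd_jshift intro!: continuous_intros)
  ultimately have "continuous_on UNIV (\<lambda>u::real \<times> real.
      (fst (jshift c' (snd u) (jshift c (fst u) p)), snd (jshift c' (snd u) (jshift c (fst u) p))))"
    by (rule continuous_on_Pair)
  then show ?thesis
    by simp
qed

definition jet_differentiable :: "('l::finite) jcoord \<Rightarrow> ('l jet \<Rightarrow> real) \<Rightarrow> 'l jet \<Rightarrow> bool" where
  "jet_differentiable c F p \<longleftrightarrow> (\<lambda>x. F (jshift c x p)) differentiable (at 0)"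

lemma has_real_derivative_pdc:
  "jet_differentiable c F p \<Longrightarrow> ((\<lambda>x. F (jshift c x p)) has_real_derivative pdc c F p) (at 0)"
  unfolding jet_differentiable_def pdc_def by (simp add: DERIV_deriv_iff_real_differentiable)

lemma has_real_derivative_pdc_at:
  assumes "jet_differentiable c F (jshift c x0 p)"
  shows "((\<lambda>x. F (jshift c x p)) has_real_derivative pdc c F (jshift c x0 p)) (at x0)"
proof -
  have "((\<lambda>u. F (jshift c (u + x0) p)) has_real_derivative pdc c F (jshift c x0 p)) (at 0)"
    using has_real_derivative_pdc[OF assms] by (simp add: jshift_jshift)
  then show ?thesis
    using DERIV_shift[of "\<lambda>x. F (jshift c x p)" _ 0 x0] by simp
qed

lemma pdc_eqI: "((\<lambda>x. F (jshift c x p)) has_real_derivative d) (at 0) \<Longrightarrow> pdc c F p = d"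
  unfolding pdc_def by (rule DERIV_imp_deriv)

lemma pdc_add:
  "jet_differentiable c F p \<Longrightarrow> jet_differentiable c G p \<Longrightarrow>
    pdc c (\<lambda>q. F q + G q) p = pdc c F p + pdc c G p"
  by (rule pdc_eqI) (intro derivative_intros has_real_derivative_pdc)

lemma pdc_mult:
  assumes "jet_differentiable c F p" "jet_differentiable c G p"
  shows "pdc c (\<lambda>q. F q * G q) p = pdc c F p * G p + F p * pdc c G p"
  using DERIV_mult[OF has_real_derivative_pdc[OF assms(1)] has_real_derivative_pdc[OF assms(2)]]
  by (intro pdc_eqI) (simp add: algebra_simps)

lemma pdc_scale: "jet_differentiable c F p \<Longrightarrow> pdc c (\<lambda>q. a * F q) p = a * pdc c F p"
  by (rule pdc_eqI) (rule DERIV_cmult[OF has_real_derivative_pdc])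

lemma pdc_const [simp]: "pdc c (\<lambda>q. a) p = 0"
  by (rule pdc_eqI) simp

lemma pdc_sum:
  "(\<And>i. i \<in> A \<Longrightarrow> jet_differentiable c (f i) p) \<Longrightarrow>
    pdc c (\<lambda>q. \<Sum>i\<in>A. f i q) p = (\<Sum>i\<in>A. pdc c (f i) p)"
  by (rule pdc_eqI) (rule DERIV_sum, rule has_real_derivative_pdc, simp)

lemma has_real_derivative_jet_coord:
  "((\<lambda>x. fst (jshift c x p) j $ k) has_real_derivative
     (case c of TC \<Rightarrow> 0 | QC j' k' \<Rightarrow> if j = j' \<and> k = k' then 1 else 0)) (at x0)"
  unfolding jet_coord_jshift by (cases c) (auto intro!: derivative_eq_intros)

lemma pdc_jet_coord:
  "pdc c (\<lambda>q. fst q j $ k) p = (case c of TC \<Rightarrow> 0 | QC j' k' \<Rightarrow> if j = j' \<and> k = k' then 1 else 0)"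
  by (rule pdc_eqI) (rule has_real_derivative_jet_coord)

lemma jet_differentiable_jet_coord: "jet_differentiable c (\<lambda>q. fst q j $ k) p"
  unfolding jet_differentiable_def real_differentiable_def by (rule exI, rule has_real_derivative_jet_coord)

lemma continuous_on_jet_coord: "continuous_on UNIV (\<lambda>q::('l::finite) jet. fst q j $ k)"
  by (intro continuous_on_component
      continuous_on_compose2[OF continuous_on_product_coordinates continuous_on_fst]) auto

section \<open>Smooth jet functions\<close>

definition pd_regular :: "(('l::finite) jet \<Rightarrow> real) \<Rightarrow> bool" where
  "pd_regular F \<longleftrightarrow> continuous_on UNIV F \<and> (\<forall>c p. jet_differentiable c F p)"

lemma smooth_jet_iff_pd_regular: "smooth_jet F \<longleftrightarrow> (\<forall>cs. pd_regular (pd_list cs F))"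
  unfolding smooth_jet_def pd_regular_def jet_differentiable_def by blast

lemma pd_list_Nil [simp]: "pd_list [] F = F"
  by (simp add: pd_list_def)

lemma pd_list_Cons [simp]: "pd_list (c # cs) F = pdc c (pd_list cs F)"
  by (simp add: pd_list_def)

lemma pd_list_snoc: "pd_list (cs @ [c]) F = pd_list cs (pdc c F)"
  by (simp add: pd_list_def)

lemma pd_regular_add: "pd_regular F \<Longrightarrow> pd_regular G \<Longrightarrow> pd_regular (\<lambda>q. F q + G q)"
  unfolding pd_regular_def jet_differentiable_def by (auto intro: continuous_on_add)

lemma pd_regular_mult: "pd_regular F \<Longrightarrow> pd_regular G \<Longrightarrow> pd_regular (\<lambda>q. F q * G q)"
  unfolding pd_regular_def jet_differentiable_def by (auto intro: continuous_on_mult)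

lemma pd_list_add:
  assumes "\<And>cs'. length cs' < length cs \<Longrightarrow> pd_regular (pd_list cs' F) \<and> pd_regular (pd_list cs' G)"
  shows "pd_list cs (\<lambda>q. F q + G q) = (\<lambda>q. pd_list cs F q + pd_list cs G q)"
  using assms
proof (induction cs)
  case (Cons c cs)
  then have IH: "pd_list cs (\<lambda>q. F q + G q) = (\<lambda>q. pd_list cs F q + pd_list cs G q)"
    by force
  have "pd_regular (pd_list cs F)" "pd_regular (pd_list cs G)"
    using Cons.prems[of cs] by auto
  then show ?case
    by (simp add: IH fun_eq_iff pd_regular_def pdc_add)
qed simp

lemma smooth_jet_imp_pd_regular: "smooth_jet F \<Longrightarrow> pd_regular F"
  unfolding smooth_jet_iff_pd_regular by (metis pd_list_Nil)

lemma smooth_jet_imp_jet_differentiable: "smooth_jet F \<Longrightarrow> jet_differentiable c F p"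
  using smooth_jet_imp_pd_regular pd_regular_def by blast

lemma smooth_jet_imp_continuous: "smooth_jet F \<Longrightarrow> continuous_on UNIV F"
  using smooth_jet_imp_pd_regular pd_regular_def by blast

lemma smooth_jet_pdc: "smooth_jet F \<Longrightarrow> smooth_jet (pdc c F)"
  unfolding smooth_jet_iff_pd_regular by (metis pd_list_snoc)

lemma smooth_jet_add: "smooth_jet F \<Longrightarrow> smooth_jet G \<Longrightarrow> smooth_jet (\<lambda>q. F q + G q)"
  unfolding smooth_jet_iff_pd_regular by (simp add: pd_list_add pd_regular_add)

lemma pd_list_mult_pd_regular:
  assumes "smooth_jet F" "smooth_jet G"
  shows "pd_regular (pd_list cs (\<lambda>q. F q * G q))"
  using assms
proof (induction "length cs" arbitrary: F G cs rule: less_induct)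
  case less
  show ?case
  proof (cases cs rule: rev_exhaust)
    case Nil
    then show ?thesis
      using less.prems by (simp add: pd_regular_mult smooth_jet_imp_pd_regular)
  next
    case (snoc cs' c)
    define A where "A = (\<lambda>q. pdc c F q * G q)"
    define B where "B = (\<lambda>q. F q * pdc c G q)"
    have reg: "pd_regular (pd_list cs'' A) \<and> pd_regular (pd_list cs'' B)" if "length cs'' \<le> length cs'" for cs''
      using less.hyps[of cs'' "pdc c F" G] less.hyps[of cs'' F "pdc c G"] less.prems that snoc
      by (simp add: A_def B_def smooth_jet_pdc)
    have "pdc c (\<lambda>q. F q * G q) = (\<lambda>q. A q + B q)"
      using less.prems by (simp add: fun_eq_iff A_def B_def pdc_mult smooth_jet_imp_jet_differentiable)
    then have "pd_list cs (\<lambda>q. F q * G q) = (\<lambda>q. pd_list cs' A q + pd_list cs' B q)"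
      using reg by (simp add: snoc pd_list_snoc pd_list_add)
    then show ?thesis
      using reg[of cs'] by (simp add: pd_regular_add)
  qed
qed

lemma smooth_jet_mult: "smooth_jet F \<Longrightarrow> smooth_jet G \<Longrightarrow> smooth_jet (\<lambda>q. F q * G q)"
  unfolding smooth_jet_iff_pd_regular[of "\<lambda>q. F q * G q"] by (blast intro: pd_list_mult_pd_regular)

lemma smooth_jet_const: "smooth_jet (\<lambda>q::('l::finite) jet. a)"
proof -
  have const: "pd_list cs (\<lambda>q::'l jet. a) = (\<lambda>q. if cs = [] then a else 0)" for cs
    by (induction cs) simp_all
  show ?thesis
    unfolding smooth_jet_iff_pd_regular pd_regular_def jet_differentiable_def const by simp
qed

lemma smooth_jet_jet_coord: "smooth_jet (\<lambda>q. fst q j $ k)"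
proof -
  have "pd_regular (pd_list cs (\<lambda>q. fst q j $ k))" for cs
  proof (cases cs rule: rev_exhaust)
    case Nil
    then show ?thesis
      by (simp add: pd_regular_def continuous_on_jet_coord jet_differentiable_jet_coord)
  next
    case (snoc cs' c)
    have "pdc c (\<lambda>q. fst q j $ k) = (\<lambda>q. case c of TC \<Rightarrow> 0 | QC j' k' \<Rightarrow> if j = j' \<and> k = k' then 1 else 0)"
      by (simp add: fun_eq_iff pdc_jet_coord)
    then show ?thesis
      using smooth_jet_const[unfolded smooth_jet_iff_pd_regular] by (metis pd_list_snoc snoc)
  qed
  then show ?thesis
    by (simp add: smooth_jet_iff_pd_regular)
qed

lemma smooth_jet_scale: "smooth_jet F \<Longrightarrow> smooth_jet (\<lambda>q. a * F q)"
  using smooth_jet_mult[OF smooth_jet_const] by blast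

lemma smooth_jet_sum:
  "(\<And>i. i \<in> A \<Longrightarrow> smooth_jet (f i)) \<Longrightarrow> smooth_jet (\<lambda>q. \<Sum>i\<in>A. f i q)"
proof (induction A rule: infinite_finite_induct)
  case (insert x F)
  then show ?case using smooth_jet_add[of "f x" "\<lambda>q. \<Sum>i\<in>F. f i q"] by simp
qed (simp_all add: smooth_jet_const)

lemma second_difference_mvt:
  assumes F: "smooth_jet F" and "x > 0" "y > 0"
  obtains \<xi> \<eta> where "0 < \<xi>" "\<xi> < x" "0 < \<eta>" "\<eta> < y"
    "F (jshift a x (jshift b y p)) - F (jshift a x p) - F (jshift b y p) + F p
       = x * y * pdc b (pdc a F) (jshift b \<eta> (jshift a \<xi> p))"
proof -
  define \<Phi> where "\<Phi> u = F (jshift a u (jshift b y p)) - F (jshift a u p)" for u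
  have "(\<Phi> has_real_derivative (pdc a F (jshift a u (jshift b y p)) - pdc a F (jshift a u p))) (at u)" for u
    unfolding \<Phi>_def
    by (intro DERIV_diff has_real_derivative_pdc_at smooth_jet_imp_jet_differentiable F)
  from MVT2[OF \<open>x > 0\<close> this] obtain \<xi> where \<xi>: "0 < \<xi>" "\<xi> < x"
    and e1: "\<Phi> x - \<Phi> 0 = (x - 0) * (pdc a F (jshift a \<xi> (jshift b y p)) - pdc a F (jshift a \<xi> p))"
    by blast
  define \<Psi> where "\<Psi> v = pdc a F (jshift b v (jshift a \<xi> p))" for v
  have "(\<Psi> has_real_derivative pdc b (pdc a F) (jshift b v (jshift a \<xi> p))) (at v)" for v
    unfolding \<Psi>_def
    by (intro has_real_derivative_pdc_at smooth_jet_imp_jet_differentiable smooth_jet_pdc F)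
  from MVT2[OF \<open>y > 0\<close> this] obtain \<eta> where \<eta>: "0 < \<eta>" "\<eta> < y"
    and e2: "\<Psi> y - \<Psi> 0 = (y - 0) * pdc b (pdc a F) (jshift b \<eta> (jshift a \<xi> p))"
    by blast
  have "F (jshift a x (jshift b y p)) - F (jshift a x p) - F (jshift b y p) + F p = \<Phi> x - \<Phi> 0"
    by (simp add: \<Phi>_def)
  also have "\<dots> = x * (\<Psi> y - \<Psi> 0)"
    using e1 by (simp add: \<Psi>_def jshift_commute[of a \<xi> b y])
  also have "\<dots> = x * y * pdc b (pdc a F) (jshift b \<eta> (jshift a \<xi> p))"
    using e2 by simp
  finally show ?thesis
    using \<xi> \<eta> that by blast
qed

lemma smooth_jet_jshift_jshift_near:
  assumes G: "smooth_jet G" and "e > 0"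
  obtains d where "d > 0"
    "\<And>\<xi> \<eta>. 0 < \<xi> \<Longrightarrow> \<xi> < d \<Longrightarrow> 0 < \<eta> \<Longrightarrow> \<eta> < d \<Longrightarrow> \<bar>G (jshift b \<eta> (jshift a \<xi> p)) - G p\<bar> < e"
proof -
  have "continuous_on UNIV (\<lambda>u. G (jshift b (snd u) (jshift a (fst u) p)))"
    by (rule continuous_on_compose2[OF smooth_jet_imp_continuous[OF G] continuous_on_jshift_jshift]) auto
  then obtain d where "d > 0"
    and d: "\<And>u. dist u (0, 0) < d \<Longrightarrow> dist (G (jshift b (snd u) (jshift a (fst u) p))) (G p) < e"
    using \<open>e > 0\<close> unfolding continuous_on_iff by (metis UNIV_I jshift_zero fst_conv snd_conv)
  have "\<bar>G (jshift b \<eta> (jshift a \<xi> p)) - G p\<bar> < e" if "0 < \<xi>" "\<xi> < d / 2" "0 < \<eta>" "\<eta> < d / 2" for \<xi> \<eta>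
  proof -
    have "dist (\<xi>, \<eta>) (0, 0) \<le> \<bar>\<xi>\<bar> + \<bar>\<eta>\<bar>"
      by (simp add: dist_Pair_Pair dist_real_def sqrt_sum_squares_le_sum_abs)
    then show ?thesis
      using d[of "(\<xi>, \<eta>)"] that by (simp add: dist_real_def)
  qed
  then show ?thesis
    using that[of "d / 2"] \<open>d > 0\<close> by simp
qed

lemma pdc_commute:
  assumes F: "smooth_jet F"
  shows "pdc a (pdc b F) p = pdc b (pdc a F) p"
proof -
  have close: "\<bar>pdc a (pdc b F) p - pdc b (pdc a F) p\<bar> < e" if "e > 0" for e :: real
  proof -
    have "e / 2 > 0"
      using \<open>e > 0\<close> by simp
    obtain d1 where "d1 > 0" and d1: "\<And>\<xi> \<eta>. 0 < \<xi> \<Longrightarrow> \<xi> < d1 \<Longrightarrow> 0 < \<eta> \<Longrightarrow> \<eta> < d1 \<Longrightarrow>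
        \<bar>pdc a (pdc b F) (jshift b \<eta> (jshift a \<xi> p)) - pdc a (pdc b F) p\<bar> < e / 2"
      using smooth_jet_jshift_jshift_near[OF smooth_jet_pdc[OF smooth_jet_pdc[OF F]] \<open>e / 2 > 0\<close>] by blast
    obtain d2 where "d2 > 0" and d2: "\<And>\<xi> \<eta>. 0 < \<xi> \<Longrightarrow> \<xi> < d2 \<Longrightarrow> 0 < \<eta> \<Longrightarrow> \<eta> < d2 \<Longrightarrow>
        \<bar>pdc b (pdc a F) (jshift b \<eta> (jshift a \<xi> p)) - pdc b (pdc a F) p\<bar> < e / 2"
      using smooth_jet_jshift_jshift_near[OF smooth_jet_pdc[OF smooth_jet_pdc[OF F]] \<open>e / 2 > 0\<close>] by blast
    define x where "x = min d1 d2"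
    have "x > 0"
      using \<open>d1 > 0\<close> \<open>d2 > 0\<close> by (simp add: x_def)
    obtain \<xi> \<eta> where \<xi>\<eta>: "0 < \<xi>" "\<xi> < x" "0 < \<eta>" "\<eta> < x"
      and E1: "F (jshift a x (jshift b x p)) - F (jshift a x p) - F (jshift b x p) + F p
        = x * x * pdc b (pdc a F) (jshift b \<eta> (jshift a \<xi> p))"
      by (rule second_difference_mvt[OF F \<open>x > 0\<close> \<open>x > 0\<close>])
    obtain \<xi>' \<eta>' where \<xi>\<eta>': "0 < \<xi>'" "\<xi>' < x" "0 < \<eta>'" "\<eta>' < x"
      and E2: "F (jshift b x (jshift a x p)) - F (jshift b x p) - F (jshift a x p) + F p
        = x * x * pdc a (pdc b F) (jshift a \<eta>' (jshift b \<xi>' p))"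
      by (rule second_difference_mvt[OF F \<open>x > 0\<close> \<open>x > 0\<close>])
    have "x * x * pdc b (pdc a F) (jshift b \<eta> (jshift a \<xi> p))
        = x * x * pdc a (pdc b F) (jshift b \<xi>' (jshift a \<eta>' p))"
      using E1 E2 unfolding jshift_commute[of b x a x] jshift_commute[of a \<eta>' b \<xi>'] by linarith
    then have "pdc b (pdc a F) (jshift b \<eta> (jshift a \<xi> p)) = pdc a (pdc b F) (jshift b \<xi>' (jshift a \<eta>' p))"
      using \<open>x > 0\<close> by simp
    moreover have "\<bar>pdc b (pdc a F) (jshift b \<eta> (jshift a \<xi> p)) - pdc b (pdc a F) p\<bar> < e / 2"
      using d2 \<xi>\<eta> by (simp add: x_def)
    moreover have "\<bar>pdc a (pdc b F) (jshift b \<xi>' (jshift a \<eta>' p)) - pdc a (pdc b F) p\<bar> < e / 2"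
      using d1 \<xi>\<eta>' by (simp add: x_def)
    ultimately show ?thesis
      by linarith
  qed
  show ?thesis
  proof (rule ccontr)
    assume "pdc a (pdc b F) p \<noteq> pdc b (pdc a F) p"
    then show False
      using close[of "\<bar>pdc a (pdc b F) p - pdc b (pdc a F) p\<bar>"] by simp
  qed
qed

section \<open>Jet functions of finite order\<close>

lemma depends_upto_mono: "depends_upto K F \<Longrightarrow> K \<le> K' \<Longrightarrow> depends_upto K' F"
  unfolding depends_upto_def by auto

lemma depends_upto_const: "depends_upto K (\<lambda>q. a)"
  unfolding depends_upto_def by auto

lemma depends_upto_jet_coord: "j \<le> K \<Longrightarrow> depends_upto K (\<lambda>q. fst q j $ k)"
  unfolding depends_upto_def by auto

lemma depends_upto_comp2:
  "depends_upto K F \<Longrightarrow> depends_upto K G \<Longrightarrow> depends_upto K (\<lambda>q. f (F q) (G q))"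
  unfolding depends_upto_def by metis

lemma depends_upto_component:
  "depends_upto K V \<Longrightarrow> depends_upto K (\<lambda>q. V q $ i $ a)"
  using depends_upto_comp2[of K V V "\<lambda>x y. x $ i $ a"] by simp

lemma depends_upto_sum:
  "(\<And>i. i \<in> A \<Longrightarrow> depends_upto K (f i)) \<Longrightarrow> depends_upto K (\<lambda>q. \<Sum>i\<in>A. f i q)"
  unfolding depends_upto_def by (intro allI impI sum.cong) auto

lemma depends_upto_eq:
  assumes "depends_upto K F" "\<forall>j\<le>K. fst p j = fst p' j" "snd p = snd p'"
  shows "F p = F p'"
  using assms unfolding depends_upto_def by (cases p; cases p') simp

lemma depends_upto_pdc:
  fixes F :: "('l::finite) jet \<Rightarrow> real"
  assumes "depends_upto K F"
  shows "depends_upto K (pdc c F)"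
  unfolding depends_upto_def pdc_def
proof (intro allI impI)
  fix z z' :: "nat \<Rightarrow> real^'l" and t
  assume "\<forall>j\<le>K. z j = z' j"
  then have "F (jshift c x (z, t)) = F (jshift c x (z', t))" for x
    by (intro depends_upto_eq[OF assms]) (simp_all add: fst_jshift snd_jshift)
  then show "deriv (\<lambda>x. F (jshift c x (z, t))) 0 = deriv (\<lambda>x. F (jshift c x (z', t))) 0"
    by simp
qed

lemma pdc_eq_0_above:
  assumes "depends_upto K F" "K < j"
  shows "pdc (QC j k) F = (\<lambda>q. 0)"
proof
  fix p
  have "F (jshift (QC j k) x p) = F p" for x
    by (rule depends_upto_eq[OF assms(1)]) (use assms(2) in \<open>simp_all add: fst_jshift snd_jshift\<close>)
  then show "pdc (QC j k) F p = 0"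
    unfolding pdc_def by simp
qed

lemma gradq_eq_0_above: "depends_upto K F \<Longrightarrow> K < j \<Longrightarrow> gradq j F p = 0"
  unfolding gradq_def by (simp add: vec_eq_iff pdc_eq_0_above)

text \<open>\<open>tdiff\<close> sums up to \<open>jet_order\<close>, a \<open>LEAST\<close> that is meaningless for functions
  of infinite order; any explicit bound on the order may be used instead.\<close>

lemma tdiff_eq:
  assumes "depends_upto K F"
  shows "tdiff F = (\<lambda>p. pdc TC F p + (\<Sum>j\<le>K. \<Sum>k\<in>UNIV. pdc (QC j k) F p * fst p (Suc j) $ k))"
proof
  fix p
  have ord: "depends_upto (jet_order F) F" "jet_order F \<le> K"
    using assms unfolding jet_order_def by (auto intro: LeastI Least_le)
  have "(\<Sum>j\<le>K. gradq j F p \<bullet> fst p (Suc j)) = (\<Sum>j\<le>jet_order F. gradq j F p \<bullet> fst p (Suc j))"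
    using ord by (intro sum.mono_neutral_right) (auto simp: gradq_eq_0_above)
  then show "tdiff F p = pdc TC F p + (\<Sum>j\<le>K. \<Sum>k\<in>UNIV. pdc (QC j k) F p * fst p (Suc j) $ k)"
    by (simp add: tdiff_def inner_vec_def gradq_def)
qed

definition smooth_jet_upto :: "nat \<Rightarrow> (('l::finite) jet \<Rightarrow> real) \<Rightarrow> bool" where
  "smooth_jet_upto K F \<longleftrightarrow> smooth_jet F \<and> depends_upto K F"

lemma smooth_jet_upto_mono: "smooth_jet_upto K F \<Longrightarrow> K \<le> K' \<Longrightarrow> smooth_jet_upto K' F"
  unfolding smooth_jet_upto_def by (auto intro: depends_upto_mono)

lemma smooth_jet_upto_const: "smooth_jet_upto K (\<lambda>q. a)"
  unfolding smooth_jet_upto_def by (simp add: smooth_jet_const depends_upto_const)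

lemma smooth_jet_upto_jet_coord: "j \<le> K \<Longrightarrow> smooth_jet_upto K (\<lambda>q. fst q j $ k)"
  unfolding smooth_jet_upto_def by (simp add: smooth_jet_jet_coord depends_upto_jet_coord)

lemma smooth_jet_upto_add:
  "smooth_jet_upto K F \<Longrightarrow> smooth_jet_upto K G \<Longrightarrow> smooth_jet_upto K (\<lambda>q. F q + G q)"
  unfolding smooth_jet_upto_def by (auto intro: smooth_jet_add depends_upto_comp2)

lemma smooth_jet_upto_mult:
  "smooth_jet_upto K F \<Longrightarrow> smooth_jet_upto K G \<Longrightarrow> smooth_jet_upto K (\<lambda>q. F q * G q)"
  unfolding smooth_jet_upto_def by (auto intro: smooth_jet_mult depends_upto_comp2)

lemma smooth_jet_upto_scale: "smooth_jet_upto K F \<Longrightarrow> smooth_jet_upto K (\<lambda>q. a * F q)"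
  using smooth_jet_upto_mult[OF smooth_jet_upto_const] by blast

lemma smooth_jet_upto_diff:
  "smooth_jet_upto K F \<Longrightarrow> smooth_jet_upto K G \<Longrightarrow> smooth_jet_upto K (\<lambda>q. F q - G q)"
  using smooth_jet_upto_add[OF _ smooth_jet_upto_scale[of K G "-1"], of F] by simp

lemma smooth_jet_upto_sum:
  "(\<And>i. i \<in> A \<Longrightarrow> smooth_jet_upto K (f i)) \<Longrightarrow> smooth_jet_upto K (\<lambda>q. \<Sum>i\<in>A. f i q)"
  unfolding smooth_jet_upto_def by (auto intro: smooth_jet_sum depends_upto_sum)

lemma smooth_jet_upto_pdc: "smooth_jet_upto K F \<Longrightarrow> smooth_jet_upto K (pdc c F)"
  unfolding smooth_jet_upto_def by (auto intro: smooth_jet_pdc depends_upto_pdc)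

lemma smooth_jet_upto_tdiff:
  assumes "smooth_jet_upto K F"
  shows "smooth_jet_upto (Suc K) (tdiff F)"
proof -
  have dep: "depends_upto K F"
    using assms by (simp add: smooth_jet_upto_def)
  show ?thesis
    unfolding tdiff_eq[OF dep]
    by (intro smooth_jet_upto_add smooth_jet_upto_sum smooth_jet_upto_mult smooth_jet_upto_jet_coord
        smooth_jet_upto_pdc smooth_jet_upto_mono[OF assms, of "Suc K"]) auto
qed

lemma smooth_jet_upto_tdiff_funpow: "smooth_jet_upto K F \<Longrightarrow> smooth_jet_upto (K + n) ((tdiff ^^ n) F)"
  by (induction n) (auto intro: smooth_jet_upto_tdiff)

lemmas smooth_jet_upto_intros =
  smooth_jet_upto_const smooth_jet_upto_jet_coord smooth_jet_upto_add smooth_jet_upto_diff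
  smooth_jet_upto_mult smooth_jet_upto_scale smooth_jet_upto_sum smooth_jet_upto_pdc

lemma smooth_jet_upto_imp_jet_differentiable: "smooth_jet_upto K F \<Longrightarrow> jet_differentiable c F p"
  unfolding smooth_jet_upto_def by (simp add: smooth_jet_imp_jet_differentiable)

lemma tdiff_add:
  assumes "smooth_jet_upto K F" "smooth_jet_upto K G"
  shows "tdiff (\<lambda>q. F q + G q) p = tdiff F p + tdiff G p"
  using assms
  by (simp add: tdiff_eq[of K] smooth_jet_upto_def depends_upto_comp2 pdc_add
      smooth_jet_imp_jet_differentiable algebra_simps sum.distrib)

lemma tdiff_mult:
  assumes "smooth_jet_upto K F" "smooth_jet_upto K G"
  shows "tdiff (\<lambda>q. F q * G q) p = tdiff F p * G p + F p * tdiff G p"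
  using assms
  by (simp add: tdiff_eq[of K] smooth_jet_upto_def depends_upto_comp2 pdc_mult
      smooth_jet_imp_jet_differentiable algebra_simps sum.distrib sum_distrib_left sum_distrib_right)

lemma tdiff_const [simp]: "tdiff (\<lambda>q. a) p = 0"
  by (simp add: tdiff_eq[OF depends_upto_const[of 0]])

lemma tdiff_scale:
  assumes "smooth_jet_upto K F"
  shows "tdiff (\<lambda>q. a * F q) p = a * tdiff F p"
  using tdiff_mult[OF smooth_jet_upto_const assms] by simp

lemma tdiff_sum:
  assumes "\<And>i. i \<in> A \<Longrightarrow> smooth_jet_upto K (f i)"
  shows "tdiff (\<lambda>q. \<Sum>i\<in>A. f i q) p = (\<Sum>i\<in>A. tdiff (f i) p)"
  using assms
proof (induction A rule: infinite_finite_induct)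
  case (insert x A)
  then have "tdiff (\<lambda>q. f x q + (\<Sum>i\<in>A. f i q)) p = tdiff (f x) p + tdiff (\<lambda>q. \<Sum>i\<in>A. f i q) p"
    by (intro tdiff_add[of K]) (auto intro: smooth_jet_upto_sum)
  with insert show ?case
    by simp
qed simp_all

lemma sum_delta_Suc:
  fixes g :: "nat \<Rightarrow> 'l::finite \<Rightarrow> real"
  shows "(\<Sum>i\<le>K. \<Sum>k'\<in>UNIV. g i k' * (if Suc i = j \<and> k' = k then 1 else 0)) =
    (if j = 0 \<or> K < j - 1 then 0 else g (j - 1) k)"
proof -
  have "(\<Sum>k'\<in>UNIV. g i k' * (if Suc i = j \<and> k' = k then 1 else 0)) = (if Suc i = j then g i k else 0)" for i
    by (auto simp: if_distrib cong: if_cong)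
  then show ?thesis
    by (cases j) simp_all
qed

text \<open>Differentiating \<open>dF/dt\<close> with respect to \<open>q\<^sup>(\<^sup>j\<^sup>)\<close> also hits the factor \<open>q\<^sup>(\<^sup>j\<^sup>)\<close> that
  multiplies the gradient with respect to \<open>q\<^sup>(\<^sup>j\<^sup>-\<^sup>1\<^sup>)\<close> in the total derivative.\<close>

lemma pdc_tdiff:
  assumes F: "smooth_jet_upto K F"
  shows "pdc (QC j k) (tdiff F) p = tdiff (pdc (QC j k) F) p + (if j = 0 then 0 else pdc (QC (j - 1) k) F p)"
proof -
  have sm: "smooth_jet F" and dep: "depends_upto K F"
    using F by (simp_all add: smooth_jet_upto_def)
  define S where "S i k' q = pdc (QC i k') F q * fst q (Suc i) $ k'" for i k' q
  have smS: "smooth_jet (S i k')" for i k'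
    unfolding S_def by (intro smooth_jet_mult smooth_jet_pdc sm smooth_jet_jet_coord)
  have "tdiff F = (\<lambda>q. pdc TC F q + (\<Sum>i\<le>K. \<Sum>k'\<in>UNIV. S i k' q))"
    unfolding S_def by (rule tdiff_eq[OF dep])
  then have "pdc (QC j k) (tdiff F) p = pdc (QC j k) (pdc TC F) p + (\<Sum>i\<le>K. \<Sum>k'\<in>UNIV. pdc (QC j k) (S i k') p)"
    by (simp add: pdc_add pdc_sum smooth_jet_imp_jet_differentiable smooth_jet_sum smooth_jet_pdc sm smS)
  also have "(\<Sum>i\<le>K. \<Sum>k'\<in>UNIV. pdc (QC j k) (S i k') p)
      = (\<Sum>i\<le>K. \<Sum>k'\<in>UNIV. pdc (QC i k') (pdc (QC j k) F) p * fst p (Suc i) $ k')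
      + (\<Sum>i\<le>K. \<Sum>k'\<in>UNIV. pdc (QC i k') F p * (if Suc i = j \<and> k' = k then 1 else 0))"
    unfolding S_def
    by (simp add: pdc_mult smooth_jet_imp_jet_differentiable smooth_jet_pdc sm jet_differentiable_jet_coord
        pdc_jet_coord pdc_commute[OF sm, of "QC j k"] sum.distrib[symmetric])
  also have "(\<Sum>i\<le>K. \<Sum>k'\<in>UNIV. pdc (QC i k') F p * (if Suc i = j \<and> k' = k then 1 else 0)) =
      (if j = 0 then 0 else pdc (QC (j - 1) k) F p)"
    using pdc_eq_0_above[OF dep, of "j - 1" k] by (simp add: sum_delta_Suc)
  finally show ?thesis
    unfolding tdiff_eq[OF depends_upto_pdc[OF dep, of "QC j k"]]
    by (simp add: pdc_commute[OF sm, of "QC j k" TC])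
qed

lemma pdc_highest_tdiff_funpow:
  assumes "smooth_jet_upto 0 G"
  shows "pdc (QC n k) ((tdiff ^^ n) G) = pdc (QC 0 k) G"
proof (induction n)
  case (Suc n)
  have G: "smooth_jet_upto n ((tdiff ^^ n) G)"
    using smooth_jet_upto_tdiff_funpow[OF assms, of n] by simp
  then have zero: "pdc (QC (Suc n) k) ((tdiff ^^ n) G) = (\<lambda>q. 0)"
    by (intro pdc_eq_0_above[of n]) (simp_all add: smooth_jet_upto_def)
  show ?case
  proof
    fix q
    show "pdc (QC (Suc n) k) ((tdiff ^^ Suc n) G) q = pdc (QC 0 k) G q"
      using pdc_tdiff[OF G, of "Suc n" k q] by (simp add: zero Suc.IH)
  qed
qed simp

lemma pdc_next_highest_tdiff_funpow:
  assumes "smooth_jet_upto 0 G"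
  shows "pdc (QC n k) ((tdiff ^^ Suc n) G) = (\<lambda>q. real (Suc n) * tdiff (pdc (QC 0 k) G) q)"
proof (induction n)
  case 0
  then show ?case
    using pdc_tdiff[OF assms, of 0 k] by (simp add: fun_eq_iff)
next
  case (Suc n)
  have G: "smooth_jet_upto (Suc n) ((tdiff ^^ Suc n) G)"
    using smooth_jet_upto_tdiff_funpow[OF assms, of "Suc n"] by simp
  show ?case
  proof
    fix q
    have "pdc (QC (Suc n) k) ((tdiff ^^ Suc (Suc n)) G) q
        = tdiff (pdc (QC (Suc n) k) ((tdiff ^^ Suc n) G)) q + pdc (QC n k) ((tdiff ^^ Suc n) G) q"
      using pdc_tdiff[OF G, of "Suc n" k q] by simp
    also have "\<dots> = tdiff (pdc (QC 0 k) G) q + real (Suc n) * tdiff (pdc (QC 0 k) G) q"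
      unfolding pdc_highest_tdiff_funpow[OF assms] Suc.IH ..
    finally show "pdc (QC (Suc n) k) ((tdiff ^^ Suc (Suc n)) G) q = real (Suc (Suc n)) * tdiff (pdc (QC 0 k) G) q"
      by (simp add: algebra_simps)
  qed
qed

section \<open>Vector-valued jet functions\<close>

lemma inner_Basis_sum_scaleR: "b \<in> Basis \<Longrightarrow> (\<Sum>b'\<in>Basis. f b' *\<^sub>R b') \<bullet> b = f b"
  by (simp add: inner_sum_left inner_Basis if_distrib sum.delta cong: if_cong)

lemma cart_eq_inner_axis2: "(x :: real^'m^'n) $ i $ a = x \<bullet> axis i (axis a 1)"
  by (simp add: inner_axis)

lemma tdiffE_component: "tdiffE (V :: _ \<Rightarrow> real^'n) p $ k = tdiff (\<lambda>q. V q $ k) p"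
  unfolding tdiffE_def cart_eq_inner_axis
  by (simp add: inner_Basis_sum_scaleR axis_in_Basis_iff)

lemma tdiffE_component2: "tdiffE (V :: _ \<Rightarrow> real^'m^'n) p $ i $ a = tdiff (\<lambda>q. V q $ i $ a) p"
  unfolding tdiffE_def cart_eq_inner_axis2
  by (simp add: inner_Basis_sum_scaleR axis_in_Basis_iff)

lemma pdcE_component2: "pdcE c (V :: _ \<Rightarrow> real^'m^'n) p $ i $ a = pdc c (\<lambda>q. V q $ i $ a) p"
  unfolding pdcE_def cart_eq_inner_axis2
  by (simp add: inner_Basis_sum_scaleR axis_in_Basis_iff)

lemma tdiffE_funpow_component2:
  "(tdiffE ^^ n) (V :: _ \<Rightarrow> real^'m^'n) p $ i $ a = (tdiff ^^ n) (\<lambda>q. V q $ i $ a) p"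
proof (induction n arbitrary: p)
  case (Suc n)
  then have "(\<lambda>q. (tdiffE ^^ n) V q $ i $ a) = (tdiff ^^ n) (\<lambda>q. V q $ i $ a)"
    by (simp add: fun_eq_iff)
  then show ?case
    by (simp add: tdiffE_component2)
qed simp

lemma inner_vec_vec: "(v :: real^'m^'n) \<bullet> w = (\<Sum>b\<in>UNIV. v $ fst b $ snd b * w $ fst b $ snd b)"
  by (simp add: inner_vec_def sum.cartesian_product case_prod_beta)

lemma JT_component:
  "JT X p w $ k = (\<Sum>b\<in>UNIV. w $ fst b $ snd b * pdc (QC 0 k) (\<lambda>q. X q $ fst b $ snd b) p)"
  by (simp add: JT_def inner_vec_vec pdcE_component2)

lemma JT_add: "JT X p (u + v) = JT X p u + JT X p v"
  by (simp add: JT_def vec_eq_iff inner_add_left)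

lemma JT_diff: "JT X p (u - v) = JT X p u - JT X p v"
  by (simp add: JT_def vec_eq_iff inner_diff_left)

lemma smooth_jet_upto_inner_vec:
  assumes "\<And>i a. smooth_jet_upto K (\<lambda>p. V p $ i $ a)" "\<And>i a. smooth_jet_upto K (\<lambda>p. W p $ i $ a)"
  shows "smooth_jet_upto K (\<lambda>p. (V p :: real^'m^'n) \<bullet> W p)"
  unfolding inner_vec_vec using assms by (intro smooth_jet_upto_sum smooth_jet_upto_mult)

lemma smooth_jet_upto_tdiffE_funpow:
  assumes "\<And>i a. smooth_jet_upto K (\<lambda>p. (X p :: real^'m^'n) $ i $ a)"
  shows "smooth_jet_upto (K + n) (\<lambda>p. (tdiffE ^^ n) X p $ i $ a)"
  unfolding tdiffE_funpow_component2 by (rule smooth_jet_upto_tdiff_funpow[OF assms])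

lemma smooth_jet_upto_JT:
  assumes X: "\<And>i a. smooth_jet_upto 0 (\<lambda>p. X p $ i $ a)" and W: "\<And>i a. smooth_jet_upto K (\<lambda>p. W p $ i $ a)"
  shows "smooth_jet_upto K (\<lambda>p. JT X p (W p) $ k)"
  unfolding JT_component
  using assms by (intro smooth_jet_upto_sum smooth_jet_upto_mult smooth_jet_upto_pdc smooth_jet_upto_mono[OF X]) auto

lemma smooth_jet_upto_kinetic_energy:
  fixes X :: "('l::finite) jet \<Rightarrow> real^'m^'n" and m :: "'n \<Rightarrow> real"
  assumes X: "\<And>i a. smooth_jet_upto 0 (\<lambda>p. X p $ i $ a)"
  defines "Q \<equiv> \<lambda>p. \<chi> i. m i *\<^sub>R (tdiffE X p $ i)"
  shows "smooth_jet_upto 1 (\<lambda>p. 1/2 * (Q p \<bullet> tdiffE X p))"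
proof -
  have Xdot: "smooth_jet_upto 1 (\<lambda>p. tdiffE X p $ i $ a)" for i a
    using smooth_jet_upto_tdiffE_funpow[OF X, of 1] by simp
  then have "smooth_jet_upto 1 (\<lambda>p. Q p $ i $ a)" for i a
    using smooth_jet_upto_scale[OF Xdot] by (simp add: Q_def)
  then show ?thesis
    by (intro smooth_jet_upto_scale smooth_jet_upto_inner_vec Xdot)
qed

lemma smooth_jet_upto_weighted_higher_energy:
  fixes X :: "('l::finite) jet \<Rightarrow> real^'m^'n" and lam :: "'n \<Rightarrow> 'm \<Rightarrow> real"
  assumes X: "\<And>i a. smooth_jet_upto 0 (\<lambda>p. X p $ i $ a)"
  defines "Lmat \<equiv> \<lambda>v :: real^'m^'n. \<chi> i a. lam i a * v $ i $ a"
  shows "smooth_jet_upto (Suc n) (\<lambda>p. 1/2 * (Lmat ((tdiffE ^^ Suc n) X p) \<bullet> (tdiffE ^^ Suc n) X p))"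
proof -
  have Xd: "smooth_jet_upto (Suc n) (\<lambda>p. (tdiffE ^^ Suc n) X p $ i $ a)" for i a
    using smooth_jet_upto_tdiffE_funpow[OF X, of "Suc n"] by simp
  then have "smooth_jet_upto (Suc n) (\<lambda>p. Lmat ((tdiffE ^^ Suc n) X p) $ i $ a)" for i a
    using smooth_jet_upto_scale[OF Xd] by (simp add: Lmat_def)
  then show ?thesis
    by (intro smooth_jet_upto_scale smooth_jet_upto_inner_vec Xd)
qed

lemma smooth_jet_upto_JT_inner_jet_coord:
  fixes X G :: "('l::finite) jet \<Rightarrow> real^'m^'n"
  assumes X: "\<And>i a. smooth_jet_upto 0 (\<lambda>p. X p $ i $ a)" and G: "\<And>i a. smooth_jet_upto n (\<lambda>p. G p $ i $ a)"
  shows "smooth_jet_upto (Suc n) (\<lambda>p. JT X p (G p) \<bullet> fst p (Suc n))"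
proof -
  have "smooth_jet_upto (Suc n) (\<lambda>p. JT X p (G p) $ k * fst p (Suc n) $ k)" for k
    using smooth_jet_upto_mono[OF smooth_jet_upto_JT[OF X G], of "Suc n"]
    by (intro smooth_jet_upto_mult smooth_jet_upto_jet_coord) auto
  then show ?thesis
    unfolding inner_vec_def inner_real_def by (rule smooth_jet_upto_sum)
qed

section \<open>The operator \<open>\<O>\<^sub>r\<close>\<close>

lemma Oop_component:
  "Oop r Y p $ k = pdc (QC r k) Y p - real (r + 1) * tdiff (pdc (QC (Suc r) k) Y) p"
  by (simp add: Oop_def tdiffE_component gradq_def)

lemma Oop_add:
  assumes "smooth_jet_upto K A" "smooth_jet_upto K B"
  shows "Oop r (\<lambda>q. A q + B q) p = Oop r A p + Oop r B p"
proof -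
  have "pdc c (\<lambda>q. A q + B q) = (\<lambda>q. pdc c A q + pdc c B q)" for c
    using assms by (simp add: fun_eq_iff pdc_add smooth_jet_upto_imp_jet_differentiable)
  then show ?thesis
    using assms by (simp add: vec_eq_iff Oop_component tdiff_add[of K] smooth_jet_upto_pdc algebra_simps)
qed

lemma Oop_scale:
  assumes "smooth_jet_upto K A"
  shows "Oop r (\<lambda>q. a * A q) p = a *\<^sub>R Oop r A p"
proof -
  have "pdc c (\<lambda>q. a * A q) = (\<lambda>q. a * pdc c A q)" for c
    using assms by (simp add: fun_eq_iff pdc_scale smooth_jet_upto_imp_jet_differentiable)
  then show ?thesis
    using assms by (simp add: vec_eq_iff Oop_component tdiff_scale[of K] smooth_jet_upto_pdc algebra_simps)
qed

lemma Oop_diff: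
  assumes "smooth_jet_upto K A" "smooth_jet_upto K B"
  shows "Oop r (\<lambda>q. A q - B q) p = Oop r A p - Oop r B p"
  using Oop_add[OF assms(1) smooth_jet_upto_scale[OF assms(2)], of r "-1" p]
    Oop_scale[OF assms(2), of r "-1" p]
  by simp

lemma Oop_eq_gradq:
  assumes "depends_upto r F"
  shows "Oop r F p = gradq r F p"
proof -
  have "gradq (Suc r) F = (\<lambda>q. 0)"
    using gradq_eq_0_above[OF assms] by (simp add: fun_eq_iff)
  then show ?thesis
    by (simp add: Oop_def tdiffE_def)
qed

lemma Oop_tdiff:
  assumes G: "smooth_jet_upto (Suc r) G"
  shows "Oop (Suc r) (tdiff G) p = Oop r G p"
proof -
  have zero: "pdc (QC (Suc (Suc r)) k) G = (\<lambda>q. 0)" for k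
    using G by (intro pdc_eq_0_above[of "Suc r"]) (simp_all add: smooth_jet_upto_def)
  have top: "pdc (QC (Suc (Suc r)) k) (tdiff G) = pdc (QC (Suc r) k) G" for k
    by (rule ext) (simp add: pdc_tdiff[OF G] zero)
  show ?thesis
    using pdc_tdiff[OF G, of "Suc r"] by (simp add: vec_eq_iff Oop_component top algebra_simps)
qed

lemma Oop_tdiff_funpow:
  assumes "smooth_jet_upto (Suc k) F"
  shows "Oop (k + n) ((tdiff ^^ n) F) p = Oop k F p"
proof (induction n)
  case (Suc n)
  have "smooth_jet_upto (Suc (k + n)) ((tdiff ^^ n) F)"
    using smooth_jet_upto_tdiff_funpow[OF assms, of n] by simp
  with Suc.IH show ?case
    by (simp add: Oop_tdiff)
qed simp

lemma Oop_tdiff_funpow_diff: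
  assumes "smooth_jet_upto (Suc k) F" "k \<le> r"
  shows "Oop r ((tdiff ^^ (r - k)) F) p = Oop k F p"
  using Oop_tdiff_funpow[OF assms(1), of "r - k" p] assms(2) by simp

text \<open>\<open>\<Y>\<^sub>r\<close> has exactly this shape.\<close>

lemma Oop_tdiff_funpow_combination:
  assumes F: "smooth_jet_upto (Suc k1) F1" "smooth_jet_upto (Suc k2) F2" "smooth_jet_upto (Suc k3) F3"
      "smooth_jet_upto (Suc k4) F4" "smooth_jet_upto (Suc k5) F5"
    and k: "k1 \<le> r" "k2 \<le> r" "k3 \<le> r" "k4 \<le> r" "k5 \<le> r"
  shows "Oop r (\<lambda>p. (tdiff ^^ (r - k1)) F1 p + (tdiff ^^ (r - k2)) F2 p - c * (tdiff ^^ (r - k3)) F3 p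
      - (tdiff ^^ (r - k4)) F4 p + (tdiff ^^ (r - k5)) F5 p) p
    = Oop k1 F1 p + Oop k2 F2 p - c *\<^sub>R Oop k3 F3 p - Oop k4 F4 p + Oop k5 F5 p"
proof -
  have T: "smooth_jet_upto (Suc r) ((tdiff ^^ (r - k)) F)" if "smooth_jet_upto (Suc k) F" "k \<le> r" for k F
    using smooth_jet_upto_tdiff_funpow[OF that(1), of "r - k"] that(2) by simp
  show ?thesis
    using T[OF F(1) k(1)] T[OF F(2) k(2)] T[OF F(3) k(3)] T[OF F(4) k(4)] T[OF F(5) k(5)]
    by (simp add: Oop_add[of "Suc r"] Oop_diff[of "Suc r"] Oop_scale[of "Suc r"] smooth_jet_upto_add
        smooth_jet_upto_diff smooth_jet_upto_scale Oop_tdiff_funpow_diff F k)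
qed

lemma pdc_half_weighted_squares:
  assumes "\<And>b. smooth_jet (V b)"
  shows "pdc c (\<lambda>q. 1/2 * (\<Sum>b\<in>A. w b * (V b q * V b q))) p = (\<Sum>b\<in>A. w b * (V b p * pdc c (V b) p))"
proof -
  have "jet_differentiable c (\<lambda>q. \<Sum>b\<in>A. w b * (V b q * V b q)) p"
    using assms by (intro smooth_jet_imp_jet_differentiable smooth_jet_sum smooth_jet_scale smooth_jet_mult)
  then have "pdc c (\<lambda>q. 1/2 * (\<Sum>b\<in>A. w b * (V b q * V b q))) p
      = 1/2 * pdc c (\<lambda>q. \<Sum>b\<in>A. w b * (V b q * V b q)) p"
    by (rule pdc_scale)
  also have "pdc c (\<lambda>q. \<Sum>b\<in>A. w b * (V b q * V b q)) p = (\<Sum>b\<in>A. 2 * (w b * (V b p * pdc c (V b) p)))"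
    using assms
    by (simp add: pdc_sum pdc_scale pdc_mult smooth_jet_imp_jet_differentiable smooth_jet_mult smooth_jet_scale
        algebra_simps)
  finally show ?thesis
    by (simp add: sum_distrib_left[symmetric])
qed

lemma Oop_weighted_energy:
  assumes X: "\<And>b. smooth_jet_upto 0 (X b)"
  shows "Oop n (\<lambda>q. 1/2 * (\<Sum>b\<in>A. w b * ((tdiff ^^ Suc n) (X b) q * (tdiff ^^ Suc n) (X b) q))) p $ k
    = - real (Suc n) * (\<Sum>b\<in>A. w b * (tdiff ^^ Suc (Suc n)) (X b) p * pdc (QC 0 k) (X b) p)"
proof -
  define V where "V b = (tdiff ^^ Suc n) (X b)" for b
  define P where "P b = pdc (QC 0 k) (X b)" for b
  have V: "smooth_jet_upto (Suc n) (V b)" for b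
    unfolding V_def using smooth_jet_upto_tdiff_funpow[OF X, of "Suc n"] by simp
  have P: "smooth_jet_upto (Suc n) (P b)" for b
    unfolding P_def by (intro smooth_jet_upto_pdc smooth_jet_upto_mono[OF X]) simp
  have smV: "smooth_jet (V b)" for b
    using V by (simp add: smooth_jet_upto_def)
  have V_n: "pdc (QC n k) (V b) = (\<lambda>q. real (Suc n) * tdiff (P b) q)" for b
    unfolding V_def P_def by (rule pdc_next_highest_tdiff_funpow[OF X])
  have V_Suc_n: "pdc (QC (Suc n) k) (V b) = P b" for b
    unfolding V_def P_def by (rule pdc_highest_tdiff_funpow[OF X])
  define E where "E = (\<lambda>q. 1/2 * (\<Sum>b\<in>A. w b * (V b q * V b q)))"
  have E_n: "pdc (QC n k) E p = (\<Sum>b\<in>A. w b * (V b p * (real (Suc n) * tdiff (P b) p)))"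
    unfolding E_def pdc_half_weighted_squares[OF smV] V_n ..
  have "pdc (QC (Suc n) k) E = (\<lambda>q. \<Sum>b\<in>A. w b * (V b q * P b q))"
    unfolding E_def pdc_half_weighted_squares[OF smV] V_Suc_n ..
  then have "tdiff (pdc (QC (Suc n) k) E) p = (\<Sum>b\<in>A. w b * (tdiff (V b) p * P b p + V b p * tdiff (P b) p))"
    using V P
    by (simp add: tdiff_sum[of _ "Suc n"] tdiff_scale[of "Suc n"] tdiff_mult[of "Suc n"]
        smooth_jet_upto_scale smooth_jet_upto_mult)
  then have "Oop n E p $ k = - real (Suc n) * (\<Sum>b\<in>A. w b * tdiff (V b) p * P b p)"
    by (simp add: Oop_component E_n sum.distrib sum_distrib_left sum_subtractf sum_negf algebra_simps)
  then show ?thesis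
    by (simp add: E_def V_def P_def)
qed

lemma Oop_linear_in_highest:
  assumes C: "\<And>k. smooth_jet_upto n (C k)"
  shows "Oop (Suc n) (\<lambda>q. \<Sum>k\<in>UNIV. C k q * fst q (Suc n) $ k) p = (\<chi> k. C k p)"
proof -
  have "smooth_jet_upto (Suc n) (\<lambda>q. \<Sum>k\<in>UNIV. C k q * fst q (Suc n) $ k)"
    using C by (intro smooth_jet_upto_intros smooth_jet_upto_mono[OF C]) auto
  then have "Oop (Suc n) (\<lambda>q. \<Sum>k\<in>UNIV. C k q * fst q (Suc n) $ k) p
      = gradq (Suc n) (\<lambda>q. \<Sum>k\<in>UNIV. C k q * fst q (Suc n) $ k) p"
    by (intro Oop_eq_gradq) (simp add: smooth_jet_upto_def)
  moreover have "pdc (QC (Suc n) k) (C k') p = 0" for k k'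
    using C by (simp add: pdc_eq_0_above[of n] smooth_jet_upto_def)
  moreover have "smooth_jet (C k)" for k
    using C by (simp add: smooth_jet_upto_def)
  ultimately show ?thesis
    by (simp add: vec_eq_iff gradq_def pdc_sum pdc_mult smooth_jet_imp_jet_differentiable smooth_jet_mult
        smooth_jet_jet_coord jet_differentiable_jet_coord pdc_jet_coord if_distrib cong: if_cong)
qed

lemma Oop_lagrangian:
  fixes X :: "('l::finite) jet \<Rightarrow> real^'m^'n" and m :: "'n \<Rightarrow> real"
  assumes X: "\<And>i a. smooth_jet_upto 0 (\<lambda>p. X p $ i $ a)" and U: "smooth_jet_upto 0 U"
  defines "Q \<equiv> \<lambda>p. \<chi> i. m i *\<^sub>R (tdiffE X p $ i)"
  shows "Oop 0 (\<lambda>p. 1/2 * (Q p \<bullet> tdiffE X p) + U p) p = gradq 0 U p - JT X p (tdiffE Q p)"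
proof -
  define Xc where "Xc b = (\<lambda>q. X q $ fst b $ snd b)" for b :: "'n \<times> 'm"
  have Xc: "smooth_jet_upto 0 (Xc b)" for b
    using X by (simp add: Xc_def)
  have Xdot: "tdiffE X q $ fst b $ snd b = tdiff (Xc b) q" for q b
    by (simp add: tdiffE_component2 Xc_def)
  have T: "(\<lambda>p. 1/2 * (Q p \<bullet> tdiffE X p))
      = (\<lambda>q. 1/2 * (\<Sum>b\<in>UNIV. m (fst b) * ((tdiff ^^ Suc 0) (Xc b) q * (tdiff ^^ Suc 0) (Xc b) q)))"
    by (simp add: Q_def inner_vec_vec Xdot mult.assoc)
  have "smooth_jet_upto 1 (\<lambda>p. 1/2 * (Q p \<bullet> tdiffE X p))"
    unfolding Q_def by (rule smooth_jet_upto_kinetic_energy[OF X])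
  then have "Oop 0 (\<lambda>p. 1/2 * (Q p \<bullet> tdiffE X p) + U p) p = Oop 0 (\<lambda>p. 1/2 * (Q p \<bullet> tdiffE X p)) p + gradq 0 U p"
    using U smooth_jet_upto_mono[OF U, of 1]
    by (simp add: Oop_add[of 1] Oop_eq_gradq smooth_jet_upto_def)
  moreover have "tdiffE Q p $ fst b $ snd b = m (fst b) * tdiff (tdiff (Xc b)) p" for b
  proof -
    have "(\<lambda>q. Q q $ fst b $ snd b) = (\<lambda>q. m (fst b) * tdiff (Xc b) q)"
      by (simp add: Q_def Xdot)
    then show ?thesis
      using tdiff_scale[OF smooth_jet_upto_tdiff[OF Xc]] by (simp add: tdiffE_component2)
  qed
  ultimately show ?thesis
    unfolding T using Oop_weighted_energy[where X = Xc and n = 0 and A = UNIV, OF Xc]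
    by (simp add: vec_eq_iff JT_component Xc_def[symmetric] mult.assoc)
qed

lemma Oop_weighted_higher_energy:
  fixes X :: "('l::finite) jet \<Rightarrow> real^'m^'n" and lam :: "'n \<Rightarrow> 'm \<Rightarrow> real"
  assumes X: "\<And>i a. smooth_jet_upto 0 (\<lambda>p. X p $ i $ a)"
  defines "Lmat \<equiv> \<lambda>v :: real^'m^'n. \<chi> i a. lam i a * v $ i $ a"
  shows "Oop n (\<lambda>p. 1/2 * (Lmat ((tdiffE ^^ Suc n) X p) \<bullet> (tdiffE ^^ Suc n) X p)) p
    = - real (Suc n) *\<^sub>R JT X p (Lmat ((tdiffE ^^ Suc (Suc n)) X p))"
proof -
  define Xc where "Xc b = (\<lambda>q. X q $ fst b $ snd b)" for b :: "'n \<times> 'm"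
  have Xc: "smooth_jet_upto 0 (Xc b)" for b
    using X by (simp add: Xc_def)
  have "(\<lambda>p. 1/2 * (Lmat ((tdiffE ^^ Suc n) X p) \<bullet> (tdiffE ^^ Suc n) X p))
      = (\<lambda>q. 1/2 * (\<Sum>b\<in>UNIV. lam (fst b) (snd b) * ((tdiff ^^ Suc n) (Xc b) q * (tdiff ^^ Suc n) (Xc b) q)))"
    unfolding Lmat_def inner_vec_vec tdiffE_funpow_component2 by (simp add: Xc_def mult.assoc)
  then show ?thesis
    using Oop_weighted_energy[where X = Xc and A = UNIV, OF Xc]
    by (simp add: vec_eq_iff JT_component Lmat_def tdiffE_component2 tdiffE_funpow_component2 Xc_def[symmetric]
        mult.assoc)
qed

lemma Oop_JT_inner_jet_coord:
  fixes X G :: "('l::finite) jet \<Rightarrow> real^'m^'n"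
  assumes X: "\<And>i a. smooth_jet_upto 0 (\<lambda>p. X p $ i $ a)" and G: "\<And>i a. smooth_jet_upto n (\<lambda>p. G p $ i $ a)"
  shows "Oop (Suc n) (\<lambda>p. JT X p (G p) \<bullet> fst p (Suc n)) p = JT X p (G p)"
  using Oop_linear_in_highest[of n "\<lambda>k p. JT X p (G p) $ k", OF smooth_jet_upto_JT[OF X G]]
  by (simp add: inner_vec_def)

theorem proposition1p5:
  fixes X :: "('l::finite) jet \<Rightarrow> real^3^'N"
    and m :: "'N \<Rightarrow> real"
    and U0 US R :: "'l jet \<Rightarrow> real"
    and F0 FS FR G :: "'l jet \<Rightarrow> real^3^'N"
    and lam :: "'N \<Rightarrow> 3 \<Rightarrow> real"
    and s h \<sigma> \<rho> :: nat
  assumes X_dep: "depends_upto 0 X"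
    and X_smooth: "\<And>i a. smooth_jet (\<lambda>p. X p $ i $ a)"
    and m_pos: "\<And>i. m i > 0"
    and U0_dep: "depends_upto 0 U0" and U0_smooth: "smooth_jet U0"
    and F0_hyp: "\<And>p. JT X p (F0 p) = gradq 0 U0 p"
    and US_dep: "depends_upto (Suc s) US" and US_smooth: "smooth_jet US"
    and FS_hyp: "\<And>p. JT X p (FS p) = Oop s US p"
    and h_ge: "h \<ge> 1"
    and lam_pos: "\<And>i a. lam i a > 0"
    and \<sigma>_ge: "\<sigma> \<ge> 1"
    and R_dep: "depends_upto \<sigma> R" and R_smooth: "smooth_jet R"
    and FR_hyp: "\<And>p. JT X p (FR p) = - gradq \<sigma> R p"
    and \<rho>_ge: "\<rho> \<ge> 1"
    and G_dep: "depends_upto (\<rho> - 1) G"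
    and G_smooth: "\<And>i a. smooth_jet (\<lambda>p. G p $ i $ a)"
  shows
    "let Lmat = (\<lambda>v :: real^3^'N. \<chi> i. \<chi> a. lam i a * v $ i $ a);
         Xd = (\<lambda>n. (tdiffE ^^ n) X);
         FA = (\<lambda>p. Lmat (Xd (h + 1) p));
         UA = (\<lambda>p. (1/2) * (Lmat (Xd h p) \<bullet> Xd h p));
         \<gamma> = (\<lambda>p. JT X p (G p) \<bullet> fst p \<rho>);
         Q = (\<lambda>p. \<chi> i. m i *\<^sub>R (Xd 1 p $ i));
         Qdot = tdiffE Q;
         L = (\<lambda>p. (1/2) * (Q p \<bullet> Xd 1 p) + U0 p);
         F = (\<lambda>p. F0 p + FS p + FA p + FR p + G p);
         r = max (max s (h - 1)) (max \<sigma> \<rho>);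
         Y = (\<lambda>p. (tdiff ^^ r) L p + (tdiff ^^ (r - s)) US p
                 - (1 / real h) * (tdiff ^^ (r - (h - 1))) UA p
                 - (tdiff ^^ (r - \<sigma>)) R p + (tdiff ^^ (r - \<rho>)) \<gamma> p)
     in (\<forall>p. Oop r Y p = JT X p (F p - Qdot p)) \<and>
        (\<forall>p. JT X p (Qdot p) = JT X p (F p) \<longleftrightarrow>
             gradq r Y p - real (r + 1) *\<^sub>R tdiffE (gradq (Suc r) Y) p = 0)"
proof -
  define Lmat where "Lmat = (\<lambda>v :: real^3^'N. \<chi> i. \<chi> a. lam i a * v $ i $ a)"
  define Xd where "Xd = (\<lambda>n. (tdiffE ^^ n) X)"
  define FA where "FA = (\<lambda>p. Lmat (Xd (h + 1) p))"
  define UA where "UA = (\<lambda>p. (1/2) * (Lmat (Xd h p) \<bullet> Xd h p))"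
  define \<gamma> where "\<gamma> = (\<lambda>p. JT X p (G p) \<bullet> fst p \<rho>)"
  define Q where "Q = (\<lambda>p. \<chi> i. m i *\<^sub>R (Xd 1 p $ i))"
  define Qdot where "Qdot = tdiffE Q"
  define L where "L = (\<lambda>p. (1/2) * (Q p \<bullet> Xd 1 p) + U0 p)"
  define F where "F = (\<lambda>p. F0 p + FS p + FA p + FR p + G p)"
  define r where "r = max (max s (h - 1)) (max \<sigma> \<rho>)"
  define Y where "Y = (\<lambda>p. (tdiff ^^ r) L p + (tdiff ^^ (r - s)) US p
                 - (1 / real h) * (tdiff ^^ (r - (h - 1))) UA p
                 - (tdiff ^^ (r - \<sigma>)) R p + (tdiff ^^ (r - \<rho>)) \<gamma> p)"
  obtain h' \<rho>' where h': "h = Suc h'" and \<rho>': "\<rho> = Suc \<rho>'"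
    using h_ge \<rho>_ge by (metis Suc_le_D One_nat_def)
  have X: "\<And>i a. smooth_jet_upto 0 (\<lambda>p. X p $ i $ a)"
    and U0: "smooth_jet_upto 0 U0"
    and G: "\<And>i a. smooth_jet_upto \<rho>' (\<lambda>p. G p $ i $ a)"
    and US: "smooth_jet_upto (Suc s) US"
    and R: "smooth_jet_upto (Suc \<sigma>) R"
    using assms by (auto simp: smooth_jet_upto_def depends_upto_component \<rho>' intro: depends_upto_mono)
  have L: "smooth_jet_upto (Suc 0) L"
    using smooth_jet_upto_add[OF smooth_jet_upto_kinetic_energy[OF X, of m] smooth_jet_upto_mono[OF U0, of 1]]
    by (simp add: L_def Q_def Xd_def)
  have UA: "smooth_jet_upto (Suc h') UA"
    using smooth_jet_upto_weighted_higher_energy[OF X, where lam = lam and n = h']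
    by (simp add: UA_def Lmat_def Xd_def h')
  have \<gamma>: "smooth_jet_upto (Suc \<rho>) \<gamma>"
    using smooth_jet_upto_mono[OF smooth_jet_upto_JT_inner_jet_coord[OF X G], of "Suc \<rho>"]
    by (simp add: \<gamma>_def \<rho>')
  have "Oop r Y p = JT X p (F p - Qdot p)" for p
  proof -
    have r: "0 \<le> r" "s \<le> r" "h' \<le> r" "\<sigma> \<le> r" "\<rho> \<le> r"
      by (auto simp: r_def h')
    have "Oop r Y p = Oop 0 L p + Oop s US p - (1 / real h) *\<^sub>R Oop h' UA p - Oop \<sigma> R p + Oop \<rho> \<gamma> p"
      using Oop_tdiff_funpow_combination[OF L US UA R \<gamma> r, of "1 / real h" p] by (simp add: Y_def h')
    moreover have "Oop 0 L p = gradq 0 U0 p - JT X p (Qdot p)"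
      using Oop_lagrangian[OF X U0, of m p] by (simp add: L_def Q_def Qdot_def Xd_def)
    moreover have "Oop h' UA p = - real h *\<^sub>R JT X p (FA p)"
      using Oop_weighted_higher_energy[OF X, where lam = lam and n = h' and p = p]
      unfolding UA_def FA_def Xd_def Lmat_def h'[symmetric] by (simp add: h')
    moreover have "Oop \<rho> \<gamma> p = JT X p (G p)"
      using Oop_JT_inner_jet_coord[OF X G, of p] by (simp add: \<gamma>_def \<rho>')
    ultimately show ?thesis
      using F0_hyp[of p] FS_hyp[of p] FR_hyp[of p] Oop_eq_gradq[OF R_dep, of p] h_ge
      by (simp add: F_def JT_add JT_diff)
  qed
  then have "(\<forall>p. Oop r Y p = JT X p (F p - Qdot p)) \<and>
      (\<forall>p. JT X p (Qdot p) = JT X p (F p) \<longleftrightarrow> Oop r Y p = 0)"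
    by (auto simp: JT_diff)
  then show ?thesis
    unfolding Oop_def Let_def Lmat_def Xd_def FA_def UA_def \<gamma>_def Q_def Qdot_def L_def F_def r_def Y_def .
qed

end
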